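(* Let $p\ge3$ be a prime, let $k\ge1$ and let $c>0$. If $D$ is a probability distribution on $\mathbb{F}_p^k$ such that $D(W)\le1-c$ for every proper affine subspace $W$ of $\mathbb{F}_p^k$, then for every positive integer $M\ge 2kp^2\log p/(c\pi^2)$ the distribution $MD$ satisfies $|MD(x)-p^{-k}|\le p^{-2k}$ for each $x\in\mathbb{F}_p^k$.
   Context: $D(W)=\sum_{x\in W}D(x)$. $MD$ denotes the $M$-fold convolution of $D$ with itself, i.e. the distribution of the sum of $M$ independent random variables with distribution $D$. *)

theory Defs
  imports Complex_Main "HOL-Computational_Algebra.Primes"
begin

text \<open>Vectors of F_p^k are represented as functions nat => nat whose first k
  entries lie in {0..<p} and whose remaining entries are 0.\<close>

definition vecs :: "nat \<Rightarrow> nat \<Rightarrow> (nat \<Rightarrow> nat) set" where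
  "vecs p k = {x. (\<forall>i<k. x i < p) \<and> (\<forall>i\<ge>k. x i = 0)}"

definition vzero :: "nat \<Rightarrow> nat" where
  "vzero = (\<lambda>i. 0)"

definition vadd :: "nat \<Rightarrow> (nat \<Rightarrow> nat) \<Rightarrow> (nat \<Rightarrow> nat) \<Rightarrow> (nat \<Rightarrow> nat)" where
  "vadd p x y = (\<lambda>i. (x i + y i) mod p)"

definition vsub :: "nat \<Rightarrow> (nat \<Rightarrow> nat) \<Rightarrow> (nat \<Rightarrow> nat) \<Rightarrow> (nat \<Rightarrow> nat)" where
  "vsub p x y = (\<lambda>i. (x i + p - y i) mod p)"

definition vsmult :: "nat \<Rightarrow> nat \<Rightarrow> (nat \<Rightarrow> nat) \<Rightarrow> (nat \<Rightarrow> nat)" where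
  "vsmult p a x = (\<lambda>i. (a * x i) mod p)"

definition lin_subspace :: "nat \<Rightarrow> nat \<Rightarrow> (nat \<Rightarrow> nat) set \<Rightarrow> bool" where
  "lin_subspace p k V \<longleftrightarrow> V \<subseteq> vecs p k \<and> vzero \<in> V \<and>
     (\<forall>x\<in>V. \<forall>y\<in>V. vadd p x y \<in> V) \<and> (\<forall>a<p. \<forall>x\<in>V. vsmult p a x \<in> V)"

definition affine_subspace :: "nat \<Rightarrow> nat \<Rightarrow> (nat \<Rightarrow> nat) set \<Rightarrow> bool" where
  "affine_subspace p k W \<longleftrightarrow> (\<exists>v\<in>vecs p k. \<exists>V. lin_subspace p k V \<and> W = vadd p v ` V)"

definition proper_affine_subspace :: "nat \<Rightarrow> nat \<Rightarrow> (nat \<Rightarrow> nat) set \<Rightarrow> bool" where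
  "proper_affine_subspace p k W \<longleftrightarrow> affine_subspace p k W \<and> W \<noteq> vecs p k"

definition is_distribution :: "nat \<Rightarrow> nat \<Rightarrow> ((nat \<Rightarrow> nat) \<Rightarrow> real) \<Rightarrow> bool" where
  "is_distribution p k D \<longleftrightarrow> (\<forall>x\<in>vecs p k. D x \<ge> 0) \<and> (\<Sum>x\<in>vecs p k. D x) = 1"

definition conv :: "nat \<Rightarrow> nat \<Rightarrow> ((nat \<Rightarrow> nat) \<Rightarrow> real) \<Rightarrow> ((nat \<Rightarrow> nat) \<Rightarrow> real)
    \<Rightarrow> ((nat \<Rightarrow> nat) \<Rightarrow> real)" where
  "conv p k D E = (\<lambda>x. \<Sum>y\<in>vecs p k. D y * E (vsub p x y))"

fun conv_pow :: "nat \<Rightarrow> nat \<Rightarrow> ((nat \<Rightarrow> nat) \<Rightarrow> real) \<Rightarrow> nat \<Rightarrow> ((nat \<Rightarrow> nat) \<Rightarrow> real)" where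
  "conv_pow p k D 0 = (\<lambda>x. if x = vzero then 1 else 0)"
| "conv_pow p k D (Suc M) = conv p k D (conv_pow p k D M)"

end

theory Submission
  imports Defs "HOL-Library.FuncSet" "HOL-Analysis.Complex_Transcendental"
begin

(* The Fourier coefficient of MD at a frequency xi is the M-th power
   of that of D, and |D^(xi)|^2 is the sum of D x D y cos (2 pi xi.(x - y) / p) over all pairs.
   Pairs lying in the same level set of the character of xi contribute at most 1, all other pairs
   at most cos (2 pi / p) = 1 - 2 sin (pi / p)^2.  For xi <> 0 these level sets are proper affine
   hyperplanes, so each has mass at most 1 - c; bounding the probability that two samples of D
   fall into the same one gives |D^(xi)| <= exp (- c (pi / p)^2).  Fourier inversion then bounds
   |p^k MD(x) - 1| by (p^k - 1) exp (- c M (pi / p)^2), where the exponential is at most p^-2k by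
   the choice of M. *)

section \<open>Roots of unity\<close>

definition unit_root :: "nat \<Rightarrow> nat \<Rightarrow> complex" where
  "unit_root p n = cis (2 * pi * real n / real p)"

lemma unit_root_0 [simp]: "unit_root p 0 = 1"
  by (simp add: unit_root_def)

lemma norm_unit_root [simp]: "norm (unit_root p n) = 1"
  by (simp add: unit_root_def)

lemma cnj_unit_root_mult: "cnj (unit_root p n) * unit_root p n = 1"
  by (simp add: unit_root_def cis_cnj cis_mult)

lemma unit_root_add: "unit_root p (a + b) = unit_root p a * unit_root p b"
  by (simp add: unit_root_def cis_mult add_divide_distrib distrib_left)

lemma unit_root_sum: "finite A \<Longrightarrow> unit_root p (\<Sum>i\<in>A. f i) = (\<Prod>i\<in>A. unit_root p (f i))"
  by (induction A rule: finite_induct) (auto simp: unit_root_add)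

lemma unit_root_power: "unit_root p n ^ a = unit_root p (n * a)"
  by (induction a) (simp_all add: unit_root_add)

lemma unit_root_mult_self:
  assumes "p > 0"
  shows "unit_root p (p * m) = 1"
proof -
  have "2 * pi * real (p * m) / real p = 2 * pi * real m" using assms by simp
  then show ?thesis by (simp add: unit_root_def)
qed

lemma unit_root_mod: "p > 0 \<Longrightarrow> unit_root p (n mod p) = unit_root p n"
  by (metis unit_root_add unit_root_mult_self mult_1_right mod_mult_div_eq)

lemma unit_root_mult_mod: "p > 0 \<Longrightarrow> unit_root p (a * (b mod p)) = unit_root p (a * b)"
  by (metis unit_root_mod mod_mult_right_eq)

lemma Re_unit_root_le:
  assumes "p > 0" and "n mod p \<noteq> 0"
  shows "Re (unit_root p n) \<le> 1 - 2 * sin (pi / p) ^ 2"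
proof -
  define r where "r = n mod p"
  have "0 < r" "r < p" using assms by (auto simp: r_def)
  \<comment> \<open>\<open>sin (pi * r / p)\<close> is symmetric under \<open>r \<mapsto> p - r\<close>, so only \<open>r \<le> p / 2\<close> matters\<close>
  define m where "m = min r (p - r)"
  have "1 \<le> m" "2 * m \<le> p" using \<open>0 < r\<close> \<open>r < p\<close> by (auto simp: m_def)
  have mono: "pi / p \<le> pi * m / p" using \<open>1 \<le> m\<close> by (simp add: divide_right_mono)
  have half: "pi * m / p \<le> pi / 2"
  proof -
    have "pi * m \<le> pi * (p / 2)" using \<open>2 * m \<le> p\<close> by (intro mult_left_mono) auto
    then show ?thesis using \<open>p > 0\<close> by (simp add: field_simps)
  qed
  have "0 \<le> pi / p" by simp
  note bounds = this mono half pi_gt_zero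
  have "0 \<le> sin (pi / p)" by (rule sin_ge_zero) (use bounds in linarith)+
  moreover have "sin (pi / p) \<le> sin (pi * m / p)"
    by (rule sin_monotone_2pi_le) (use bounds in linarith)+
  moreover have "sin (pi * m / p) = sin (pi * r / p)"
    using \<open>r < p\<close> sin_pi_minus[of "pi * r / p"]
    by (auto simp: m_def min_def field_simps of_nat_diff)
  ultimately have "sin (pi / p) ^ 2 \<le> sin (pi * r / p) ^ 2" by (intro power_mono) auto
  moreover have "Re (unit_root p n) = Re (unit_root p r)"
    by (simp add: r_def unit_root_mod[OF \<open>p > 0\<close>])
  moreover have "Re (unit_root p r) = 1 - 2 * sin (pi * r / p) ^ 2"
    using cos_double_sin[of "pi * r / p"] by (simp add: unit_root_def mult.assoc)
  ultimately show ?thesis by simp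
qed

lemma unit_root_eq_1_iff:
  assumes "p > 0"
  shows "unit_root p n = 1 \<longleftrightarrow> n mod p = 0"
proof
  assume "n mod p = 0"
  then show "unit_root p n = 1" by (metis unit_root_mod[OF assms] unit_root_0)
next
  assume root: "unit_root p n = 1"
  show "n mod p = 0"
  proof (rule ccontr)
    assume "n mod p \<noteq> 0"
    then have "p > 1" using assms by (cases "p = 1") auto
    then have "pi / p < pi / 1" by (intro divide_strict_left_mono) auto
    then have "0 < sin (pi / p)" by (intro sin_gt_zero) (use \<open>p > 1\<close> in auto)
    then have "Re (unit_root p n) < 1"
      using Re_unit_root_le[OF assms \<open>n mod p \<noteq> 0\<close>] zero_less_power[of "sin (pi / p)" 2]
      by linarith
    with root show False by simp
  qed
qed

section \<open>Vectors of \<open>F_p^k\<close>\<close>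

lemma bij_betw_restrict_vecs:
  "bij_betw (\<lambda>x. restrict x {..<k}) (vecs p k) (\<Pi>\<^sub>E i\<in>{..<k}. {..<p})"
proof (rule bij_betwI[where g = "\<lambda>h i. if i < k then h i else 0"])
  show "(\<lambda>x. restrict x {..<k}) \<in> vecs p k \<rightarrow> (\<Pi>\<^sub>E i\<in>{..<k}. {..<p})"
    by (auto simp: vecs_def)
  show "(\<lambda>h i. if i < k then h i else 0) \<in> (\<Pi>\<^sub>E i\<in>{..<k}. {..<p}) \<rightarrow> vecs p k"
    by (auto simp: vecs_def PiE_def Pi_def)
qed (auto simp: vecs_def PiE_def extensional_def)

lemma finite_vecs [simp]: "finite (vecs p k)"
  using bij_betw_finite[OF bij_betw_restrict_vecs] by (simp add: finite_PiE)

lemma card_vecs: "card (vecs p k) = p ^ k"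
  using bij_betw_same_card[OF bij_betw_restrict_vecs] by (simp add: card_PiE)

lemma vecs_coord_mod [simp]: "x \<in> vecs p k \<Longrightarrow> x i mod p = x i"
  by (cases "i < k") (auto simp: vecs_def)

lemma vecs_coord_le: "x \<in> vecs p k \<Longrightarrow> x i \<le> p"
  by (cases "i < k") (auto simp: vecs_def)

lemma vzero_in_vecs: "p > 0 \<Longrightarrow> vzero \<in> vecs p k"
  by (simp add: vecs_def vzero_def)

lemma vadd_in_vecs: "p > 0 \<Longrightarrow> x \<in> vecs p k \<Longrightarrow> y \<in> vecs p k \<Longrightarrow> vadd p x y \<in> vecs p k"
  by (simp add: vecs_def vadd_def)

lemma vsub_in_vecs: "p > 0 \<Longrightarrow> x \<in> vecs p k \<Longrightarrow> y \<in> vecs p k \<Longrightarrow> vsub p x y \<in> vecs p k"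
  by (simp add: vecs_def vsub_def)

lemma vsmult_in_vecs: "p > 0 \<Longrightarrow> x \<in> vecs p k \<Longrightarrow> vsmult p a x \<in> vecs p k"
  by (simp add: vecs_def vsmult_def)

lemma vsub_vadd:
  assumes "y \<in> vecs p k" "z \<in> vecs p k"
  shows "vsub p (vadd p y z) y = z"
proof
  fix i
  have "y i \<le> p" using assms(1) by (rule vecs_coord_le)
  then have "((y i + z i) mod p + p - y i) mod p = ((y i + z i) mod p + (p - y i)) mod p" by simp
  also have "\<dots> = (y i + z i + (p - y i)) mod p" by (simp add: mod_add_left_eq)
  also have "\<dots> = z i" using \<open>y i \<le> p\<close> assms(2) by simp
  finally show "vsub p (vadd p y z) y i = z i" by (simp add: vsub_def vadd_def)
qed

lemma vadd_vsub:
  assumes "x \<in> vecs p k" "y \<in> vecs p k"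
  shows "vadd p y (vsub p x y) = x"
proof
  fix i
  have "y i \<le> p" using assms(2) by (rule vecs_coord_le)
  then show "vadd p y (vsub p x y) i = x i"
    using assms(1) by (simp add: vsub_def vadd_def mod_add_right_eq)
qed

lemma vsub_eq_vzero_iff:
  assumes "x \<in> vecs p k" "y \<in> vecs p k"
  shows "vsub p x y = vzero \<longleftrightarrow> x = y"
proof
  assume "vsub p x y = vzero"
  then have "x = vadd p y vzero" using vadd_vsub[OF assms] by simp
  also have "\<dots> = y" using assms(2) by (simp add: vadd_def vzero_def)
  finally show "x = y" .
qed (use assms in \<open>auto simp: vecs_def vsub_def vzero_def\<close>)

lemma bij_betw_vadd: "p > 0 \<Longrightarrow> y \<in> vecs p k \<Longrightarrow> bij_betw (vadd p y) (vecs p k) (vecs p k)"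
  by (rule bij_betwI[where g = "\<lambda>x. vsub p x y"])
    (auto simp: vadd_in_vecs vsub_in_vecs vsub_vadd vadd_vsub)

lemma vecs_nonzero_coord:
  assumes "z \<in> vecs p k" "z \<noteq> vzero"
  obtains i where "i < k" "0 < z i" "z i < p"
  using assms by (auto simp: vecs_def vzero_def fun_eq_iff) (metis not_le gr0I)

definition unit_vec :: "nat \<Rightarrow> nat \<Rightarrow> nat" where
  "unit_vec i = (\<lambda>j. if j = i then 1 else 0)"

lemma unit_vec_in_vecs: "p > 1 \<Longrightarrow> i < k \<Longrightarrow> unit_vec i \<in> vecs p k"
  by (simp add: vecs_def unit_vec_def)

section \<open>Characters and the Fourier transform\<close>

definition character :: "nat \<Rightarrow> nat \<Rightarrow> (nat \<Rightarrow> nat) \<Rightarrow> (nat \<Rightarrow> nat) \<Rightarrow> complex" where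
  "character p k \<xi> x = unit_root p (\<Sum>i<k. \<xi> i * x i)"

lemma character_commute: "character p k \<xi> x = character p k x \<xi>"
  by (simp add: character_def mult.commute)

lemma character_vzero [simp]: "character p k \<xi> vzero = 1" "character p k vzero x = 1"
  by (simp_all add: character_def vzero_def)

lemma norm_character [simp]: "norm (character p k \<xi> x) = 1"
  by (simp add: character_def)

lemma character_nonzero [simp]: "character p k \<xi> x \<noteq> 0"
  by (simp add: character_def unit_root_def)

lemma cnj_character_mult: "cnj (character p k \<xi> x) * character p k \<xi> x = 1"
  by (simp add: character_def cnj_unit_root_mult)

lemma character_mult_cnj: "character p k \<xi> x * cnj (character p k \<xi> x) = 1"
  by (metis cnj_character_mult mult.commute)

lemma character_mult_cnj_eq_1_iff:
  "character p k \<xi> x * cnj (character p k \<xi> y) = 1 \<longleftrightarrow> character p k \<xi> x = character p k \<xi> y"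
proof
  assume "character p k \<xi> x * cnj (character p k \<xi> y) = 1"
  then have "character p k \<xi> x * (cnj (character p k \<xi> y) * character p k \<xi> y) = character p k \<xi> y"
    by (metis mult.assoc mult_1)
  then show "character p k \<xi> x = character p k \<xi> y" by (simp add: cnj_character_mult)
qed (simp add: character_mult_cnj)

lemma character_prod: "character p k \<xi> x = (\<Prod>i<k. unit_root p (\<xi> i * x i))"
  by (simp add: character_def unit_root_sum)

lemma character_vadd:
  "p > 0 \<Longrightarrow> character p k \<xi> (vadd p x y) = character p k \<xi> x * character p k \<xi> y"
  by (simp add: character_prod vadd_def unit_root_mult_mod distrib_left unit_root_add prod.distrib)

lemma character_vsmult: "p > 0 \<Longrightarrow> character p k \<xi> (vsmult p a x) = character p k \<xi> x ^ a"
  by (simp add: character_prod vsmult_def unit_root_mult_mod unit_root_power prod_power_distrib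
      mult.commute mult.left_commute)

lemma character_vsub:
  assumes "p > 0" "x \<in> vecs p k" "y \<in> vecs p k"
  shows "character p k \<xi> (vsub p x y) = character p k \<xi> x * cnj (character p k \<xi> y)"
proof -
  have "character p k \<xi> x = character p k \<xi> y * character p k \<xi> (vsub p x y)"
    by (metis character_vadd[OF assms(1)] vadd_vsub[OF assms(2,3)])
  then show ?thesis by (metis cnj_character_mult mult.assoc mult.commute mult_1)
qed

lemma character_unit_vec: "i < k \<Longrightarrow> character p k \<xi> (unit_vec i) = unit_root p (\<xi> i)"
  by (simp add: character_def unit_vec_def if_distrib sum.delta' cong: if_cong)

lemma Re_character_le:
  assumes "p > 0" "character p k \<xi> z \<noteq> 1"
  shows "Re (character p k \<xi> z) \<le> 1 - 2 * sin (pi / p) ^ 2"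
  using assms Re_unit_root_le unit_root_eq_1_iff by (auto simp: character_def)

lemma Re_character_vsub_le:
  assumes "p > 0" "x \<in> vecs p k" "y \<in> vecs p k"
  shows "Re (character p k \<xi> (vsub p x y))
    \<le> (if character p k \<xi> y = character p k \<xi> x then 1 else 1 - 2 * sin (pi / p) ^ 2)"
proof -
  have "character p k \<xi> (vsub p x y) = 1 \<longleftrightarrow> character p k \<xi> y = character p k \<xi> x"
    using assms by (auto simp: character_vsub character_mult_cnj_eq_1_iff)
  then show ?thesis
    using Re_character_le[OF assms(1)] complex_Re_le_cmod[of "character p k \<xi> (vsub p x y)"] by auto
qed

lemma sum_character:
  assumes "p > 1" "z \<in> vecs p k"
  shows "(\<Sum>\<xi>\<in>vecs p k. character p k \<xi> z) = (if z = vzero then of_nat (p ^ k) else 0)"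
proof (cases "z = vzero")
  case True
  then show ?thesis by (simp add: card_vecs)
next
  case False
  obtain i where i: "i < k" "0 < z i" "z i < p" using vecs_nonzero_coord[OF assms(2) False] .
  let ?S = "\<Sum>\<xi>\<in>vecs p k. character p k z \<xi>"
  have u: "unit_vec i \<in> vecs p k" using unit_vec_in_vecs[OF assms(1) i(1)] .
  \<comment> \<open>the sum is invariant under translation by \<open>unit_vec i\<close>, which multiplies it by a root \<open>\<noteq> 1\<close>\<close>
  have "?S = (\<Sum>\<xi>\<in>vecs p k. character p k z (vadd p (unit_vec i) \<xi>))"
    using assms(1) sum.reindex_bij_betw[OF bij_betw_vadd[OF _ u], of "character p k z"] by simp
  also have "\<dots> = character p k z (unit_vec i) * ?S"
    using assms(1) by (simp add: character_vadd sum_distrib_left)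
  finally have "(1 - character p k z (unit_vec i)) * ?S = 0" by (simp add: algebra_simps)
  moreover have "character p k z (unit_vec i) \<noteq> 1"
    using i assms(1) by (simp add: character_unit_vec unit_root_eq_1_iff)
  ultimately show ?thesis using False by (simp add: character_commute)
qed

definition fourier :: "nat \<Rightarrow> nat \<Rightarrow> ((nat \<Rightarrow> nat) \<Rightarrow> real) \<Rightarrow> (nat \<Rightarrow> nat) \<Rightarrow> complex" where
  "fourier p k f \<xi> = (\<Sum>x\<in>vecs p k. of_real (f x) * character p k \<xi> x)"

lemma fourier_vzero: "is_distribution p k D \<Longrightarrow> fourier p k D vzero = 1"
  by (simp add: fourier_def is_distribution_def flip: of_real_sum)

lemma fourier_conv:
  assumes "p > 0"
  shows "fourier p k (conv p k D G) \<xi> = fourier p k D \<xi> * fourier p k G \<xi>"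
proof -
  let ?V = "vecs p k"
  have shift: "(\<Sum>x\<in>?V. of_real (G (vsub p x y)) * character p k \<xi> x)
      = character p k \<xi> y * fourier p k G \<xi>" if y: "y \<in> ?V" for y
  proof -
    have "(\<Sum>x\<in>?V. of_real (G (vsub p x y)) * character p k \<xi> x)
        = (\<Sum>z\<in>?V. of_real (G (vsub p (vadd p y z) y)) * character p k \<xi> (vadd p y z))"
      using sum.reindex_bij_betw[OF bij_betw_vadd[OF assms y],
          of "\<lambda>x. of_real (G (vsub p x y)) * character p k \<xi> x"] by simp
    also have "\<dots> = (\<Sum>z\<in>?V. character p k \<xi> y * (of_real (G z) * character p k \<xi> z))"
      using y by (intro sum.cong) (auto simp: vsub_vadd character_vadd[OF assms])
    finally show ?thesis by (simp add: fourier_def sum_distrib_left)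
  qed
  have "fourier p k (conv p k D G) \<xi>
      = (\<Sum>x\<in>?V. \<Sum>y\<in>?V. of_real (D y) * (of_real (G (vsub p x y)) * character p k \<xi> x))"
    by (simp add: fourier_def conv_def sum_distrib_right mult.assoc)
  also have "\<dots> = (\<Sum>y\<in>?V. of_real (D y) * (\<Sum>x\<in>?V. of_real (G (vsub p x y)) * character p k \<xi> x))"
    by (subst sum.swap) (simp add: sum_distrib_left)
  also have "\<dots> = (\<Sum>y\<in>?V. of_real (D y) * character p k \<xi> y * fourier p k G \<xi>)"
    by (intro sum.cong) (auto simp: shift mult.assoc)
  finally show ?thesis by (simp add: fourier_def sum_distrib_right)
qed

lemma fourier_conv_pow:
  assumes "p > 0"
  shows "fourier p k (conv_pow p k D n) \<xi> = fourier p k D \<xi> ^ n"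
proof (induction n)
  case 0
  have "fourier p k (conv_pow p k D 0) \<xi> = (\<Sum>x\<in>vecs p k. if x = vzero then 1 else 0)"
    unfolding fourier_def by (intro sum.cong) auto
  then show ?case using vzero_in_vecs[OF assms] by simp
next
  case (Suc n)
  then show ?case by (simp add: fourier_conv[OF assms])
qed

lemma fourier_inversion:
  assumes "p > 1" "x \<in> vecs p k"
  shows "of_real (real p ^ k * f x) = (\<Sum>\<xi>\<in>vecs p k. fourier p k f \<xi> * cnj (character p k \<xi> x))"
proof -
  let ?V = "vecs p k"
  have "(\<Sum>\<xi>\<in>?V. fourier p k f \<xi> * cnj (character p k \<xi> x))
      = (\<Sum>\<xi>\<in>?V. \<Sum>y\<in>?V. of_real (f y) * character p k \<xi> (vsub p y x))"
    using assms by (simp add: fourier_def sum_distrib_right mult.assoc character_vsub)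
  also have "\<dots> = (\<Sum>y\<in>?V. of_real (f y) * (\<Sum>\<xi>\<in>?V. character p k \<xi> (vsub p y x)))"
    by (subst sum.swap) (simp add: sum_distrib_left)
  also have "\<dots> = (\<Sum>y\<in>?V. if y = x then of_real (f y) * of_nat (p ^ k) else 0)"
    using assms by (intro sum.cong) (auto simp: sum_character vsub_in_vecs vsub_eq_vzero_iff)
  finally show ?thesis using assms(2) by (simp add: mult.commute)
qed

lemma proper_affine_subspace_level_set:
  assumes p: "p > 1" and \<xi>: "\<xi> \<in> vecs p k" "\<xi> \<noteq> vzero" and x: "x \<in> vecs p k"
  shows "proper_affine_subspace p k {y \<in> vecs p k. character p k \<xi> y = character p k \<xi> x}"
    (is "proper_affine_subspace p k ?H")
proof -
  have p0: "p > 0" using p by simp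
  define L where "L = {y \<in> vecs p k. character p k \<xi> y = 1}"
  have "lin_subspace p k L"
    using p0 by (auto simp: lin_subspace_def L_def vzero_in_vecs vadd_in_vecs vsmult_in_vecs
        character_vadd character_vsmult)
  moreover have "?H = vadd p x ` L"
  proof (intro equalityI subsetI)
    fix y assume y: "y \<in> ?H"
    then have "vsub p y x \<in> L"
      using p0 x by (auto simp: L_def vsub_in_vecs character_vsub character_mult_cnj)
    moreover have "y = vadd p x (vsub p y x)" using y x by (auto simp: vadd_vsub)
    ultimately show "y \<in> vadd p x ` L" by blast
  qed (use p0 x in \<open>auto simp: L_def vadd_in_vecs character_vadd\<close>)
  ultimately have "affine_subspace p k ?H"
    unfolding affine_subspace_def using x by blast
  obtain i where i: "i < k" "0 < \<xi> i" "\<xi> i < p" using vecs_nonzero_coord[OF \<xi>] .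
  define w where "w = vadd p x (unit_vec i)"
  have "w \<in> vecs p k" using p0 x unit_vec_in_vecs[OF p i(1)] by (simp add: w_def vadd_in_vecs)
  moreover have "w \<notin> ?H"
  proof -
    have "character p k \<xi> w = character p k \<xi> x * unit_root p (\<xi> i)"
      by (simp add: w_def character_vadd[OF p0] character_unit_vec[OF i(1)])
    moreover have "unit_root p (\<xi> i) \<noteq> 1" using i p0 by (simp add: unit_root_eq_1_iff)
    ultimately show ?thesis by simp
  qed
  ultimately show ?thesis using \<open>affine_subspace p k ?H\<close> by (auto simp: proper_affine_subspace_def)
qed

section \<open>Collision probability\<close>

definition fiber_mass :: "'a set \<Rightarrow> ('a \<Rightarrow> real) \<Rightarrow> ('a \<Rightarrow> 'b) \<Rightarrow> 'a \<Rightarrow> real" where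
  "fiber_mass V D h x = (\<Sum>y\<in>{y\<in>V. h y = h x}. D y)"

definition collision_prob :: "'a set \<Rightarrow> ('a \<Rightarrow> real) \<Rightarrow> ('a \<Rightarrow> 'b) \<Rightarrow> real" where
  "collision_prob V D h = (\<Sum>x\<in>V. D x * fiber_mass V D h x)"

lemma fiber_mass_add_le:
  assumes D0: "\<And>x. x \<in> V \<Longrightarrow> D x \<ge> 0" and D1: "(\<Sum>x\<in>V. D x) = 1"
    and "h x \<noteq> h x'"
  shows "fiber_mass V D h x + fiber_mass V D h x' \<le> 1"
proof -
  have "finite V" by (rule ccontr) (use D1 in simp)
  then have "fiber_mass V D h x + fiber_mass V D h x'
      = (\<Sum>y\<in>V. (if h y = h x then D y else 0) + (if h y = h x' then D y else 0))"
    by (simp add: fiber_mass_def sum.inter_filter sum.distrib)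
  also have "\<dots> \<le> (\<Sum>y\<in>V. D y)" by (intro sum_mono) (use assms in auto)
  finally show ?thesis using D1 by simp
qed

lemma collision_prob_le:
  assumes D0: "\<And>x. x \<in> V \<Longrightarrow> D x \<ge> 0" and D1: "(\<Sum>x\<in>V. D x) = 1"
    and fiber: "\<And>x. x \<in> V \<Longrightarrow> fiber_mass V D h x \<le> 1 - c"
  shows "collision_prob V D h \<le> 1 - c"
proof -
  have "collision_prob V D h \<le> (\<Sum>x\<in>V. D x * (1 - c))"
    unfolding collision_prob_def by (intro sum_mono mult_left_mono fiber D0)
  also have "\<dots> = 1 - c" by (simp add: D1 flip: sum_distrib_right)
  finally show ?thesis .
qed

lemma collision_prob_le_sq:
  assumes D0: "\<And>x. x \<in> V \<Longrightarrow> D x \<ge> 0" and D1: "(\<Sum>x\<in>V. D x) = 1"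
    and fiber: "\<And>x. x \<in> V \<Longrightarrow> fiber_mass V D h x \<le> 1 - c"
    and "c \<le> 1 / 2"
  shows "collision_prob V D h \<le> (1 - c)\<^sup>2 + c\<^sup>2"
proof (cases "\<exists>x0\<in>V. fiber_mass V D h x0 > 1 / 2")
  case True
  then obtain x0 where x0: "x0 \<in> V" "fiber_mass V D h x0 > 1 / 2" by blast
  define m where "m = fiber_mass V D h x0"
  have "collision_prob V D h \<le> (\<Sum>x\<in>V. D x * (if h x = h x0 then m else 1 - m))"
    unfolding collision_prob_def
  proof (intro sum_mono mult_left_mono)
    fix x
    have "h x = h x0 \<Longrightarrow> fiber_mass V D h x = m" by (simp add: m_def fiber_mass_def)
    then show "fiber_mass V D h x \<le> (if h x = h x0 then m else 1 - m)"
      using fiber_mass_add_le[OF D0 D1, of h x x0] by (auto simp: m_def)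
  qed (use D0 in auto)
  also have "\<dots> = (\<Sum>x\<in>V. D x * (1 - m) + (if h x = h x0 then D x else 0) * (2 * m - 1))"
    by (intro sum.cong) (auto simp: algebra_simps)
  also have "\<dots> = (1 - m) + m * (2 * m - 1)"
  proof -
    have "finite V" by (rule ccontr) (use D1 in simp)
    then show ?thesis
      by (simp add: sum.distrib D1 m_def fiber_mass_def sum.inter_filter flip: sum_distrib_right)
  qed
  also have "\<dots> \<le> (1 - c)\<^sup>2 + c\<^sup>2"
  proof -
    have "0 \<le> (1 - c - m) * (m - c)" using fiber[OF x0(1)] x0(2) \<open>c \<le> 1 / 2\<close> by (simp add: m_def)
    then show ?thesis by (simp add: power2_eq_square algebra_simps)
  qed
  finally show ?thesis .
next
  case False
  have "collision_prob V D h \<le> (\<Sum>x\<in>V. D x * (1 / 2))"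
    unfolding collision_prob_def by (intro sum_mono mult_left_mono) (use False D0 in auto)
  also have "\<dots> = 1 / 2" by (simp only: D1 flip: sum_distrib_right)
  also have "\<dots> \<le> (1 - c)\<^sup>2 + c\<^sup>2"
    using zero_le_power2[of "c - 1 / 2"] by (simp add: power2_eq_square algebra_simps)
  finally show ?thesis .
qed

section \<open>Elementary estimates for \<open>sin\<close> and \<open>exp\<close>\<close>

lemma sin_ge_cubic:
  fixes x :: real
  assumes "0 \<le> x"
  shows "x - x ^ 3 / 6 \<le> sin x"
proof -
  have "\<bar>sin x - (\<Sum>m<3. sin_coeff m * x ^ m)\<bar> \<le> inverse (fact 3) * \<bar>x\<bar> ^ 3"
    by (rule Maclaurin_sin_bound)
  moreover have "(\<Sum>m<3. sin_coeff m * x ^ m) = x"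
    by (simp add: numeral_3_eq_3 sin_coeff_def)
  ultimately have "\<bar>sin x - x\<bar> * 6 \<le> x ^ 3" using assms by (simp add: fact_numeral)
  moreover have "- (sin x - x) * 6 \<le> \<bar>sin x - x\<bar> * 6"
    by (rule mult_right_mono) simp_all
  ultimately have "- (sin x - x) * 6 \<le> x ^ 3" by (rule order_trans[rotated])
  then show ?thesis by (simp add: field_simps)
qed

lemma exp_minus_le_quadratic:
  fixes y :: real
  assumes "0 \<le> y"
  shows "exp (- y) \<le> 1 - y + y\<^sup>2 / 2"
proof -
  obtain t where "exp (- y) = (\<Sum>m<3. (- y) ^ m / fact m) + exp t / fact 3 * (- y) ^ 3"
    using Maclaurin_exp_le by blast
  moreover have "(\<Sum>m<3. (- y) ^ m / fact m) = 1 - y + y\<^sup>2 / 2"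
    by (simp add: numeral_3_eq_3 fact_numeral power2_eq_square)
  moreover have "exp t / fact 3 * (- y) ^ 3 \<le> 0"
    using assms by (simp add: mult_nonneg_nonpos)
  ultimately show ?thesis by linarith
qed

lemma exp_minus_ge_cubic:
  fixes y :: real
  assumes "0 \<le> y"
  shows "1 - y + y\<^sup>2 / 2 - y ^ 3 / 6 \<le> exp (- y)"
proof -
  obtain t where "exp (- y) = (\<Sum>m<4. (- y) ^ m / fact m) + exp t / fact 4 * (- y) ^ 4"
    using Maclaurin_exp_le by blast
  moreover have "(\<Sum>m<4. (- y) ^ m / fact m) = 1 - y + y\<^sup>2 / 2 - y ^ 3 / 6"
    by (simp add: eval_nat_numeral fact_numeral)
  moreover have "exp t / fact 4 * (- y) ^ 4 \<ge> 0" by simp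
  ultimately show ?thesis by linarith
qed

lemma sin_sq_ge:
  fixes y :: real
  assumes "0 \<le> y" "y\<^sup>2 \<le> 6"
  shows "y\<^sup>2 * (1 - y\<^sup>2 / 6)\<^sup>2 \<le> sin y ^ 2"
proof -
  have "y - y ^ 3 / 6 = y * (1 - y\<^sup>2 / 6)"
    by (simp add: power2_eq_square power3_eq_cube algebra_simps)
  moreover have "0 \<le> y * (1 - y\<^sup>2 / 6)" using assms by simp
  ultimately have "(y * (1 - y\<^sup>2 / 6))\<^sup>2 \<le> sin y ^ 2"
    using sin_ge_cubic[OF assms(1)] by (intro power_mono) auto
  then show ?thesis by (simp add: power_mult_distrib)
qed

lemma one_sub_sin_sq_le_exp_le_1:
  fixes a y :: real
  assumes "0 \<le> a" "a \<le> 1" "0 \<le> y" "y\<^sup>2 \<le> 6 / 5"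
  shows "1 - a * (2 - a) * sin y ^ 2 \<le> exp (- (a * y\<^sup>2))"
proof -
  define z where "z = y\<^sup>2"
  have z: "0 \<le> z" "z \<le> 6 / 5" using assms by (auto simp: z_def)
  have "1 - a * z / 2 + a\<^sup>2 * z\<^sup>2 / 6 \<le> (2 - a) * (1 - z / 6)\<^sup>2"
  proof -
    have "(2 - a) * (1 - z / 6)\<^sup>2 - (1 - a * z / 2 + a\<^sup>2 * z\<^sup>2 / 6)
        = (1 - a) * (1 - 2 * z / 3) + a * z * (6 - 5 * z) / 36 + a * (1 - a) * z\<^sup>2 / 6
          + (1 - a) * z\<^sup>2 / 18"
      by (simp add: power2_eq_square field_simps)
    moreover have "0 \<le> (1 - a) * (1 - 2 * z / 3) + a * z * (6 - 5 * z) / 36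
        + a * (1 - a) * z\<^sup>2 / 6 + (1 - a) * z\<^sup>2 / 18"
      using assms z by (intro add_nonneg_nonneg mult_nonneg_nonneg divide_nonneg_nonneg) auto
    ultimately show ?thesis by linarith
  qed
  then have "a * z * (1 - a * z / 2 + a\<^sup>2 * z\<^sup>2 / 6) \<le> a * z * ((2 - a) * (1 - z / 6)\<^sup>2)"
    by (rule mult_left_mono) (use assms z in simp)
  then have poly: "a * z * (1 - a * z / 2 + a\<^sup>2 * z\<^sup>2 / 6) \<le> a * (2 - a) * (z * (1 - z / 6)\<^sup>2)"
    by (simp add: mult_ac)
  have "1 - a * (2 - a) * sin y ^ 2 \<le> 1 - a * (2 - a) * (z * (1 - z / 6)\<^sup>2)"
    using sin_sq_ge[of y] assms by (simp add: z_def mult_left_mono)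
  also have "\<dots> \<le> 1 - a * z + (a * z)\<^sup>2 / 2 - (a * z) ^ 3 / 6"
    using poly by (simp add: power2_eq_square power3_eq_cube algebra_simps)
  also have "\<dots> \<le> exp (- (a * z))"
    using assms z by (intro exp_minus_ge_cubic) simp
  finally show ?thesis by (simp add: z_def)
qed

lemma one_sub_sin_sq_le_exp_ge_1:
  fixes b y :: real
  assumes "1 \<le> b" "0 \<le> y" "y\<^sup>2 \<le> 6 / 5"
  shows "1 - b * sin y ^ 2 \<le> exp (- (b * y\<^sup>2))"
proof -
  define z where "z = y\<^sup>2"
  define s where "s = sin y ^ 2"
  have z: "0 \<le> z" "z \<le> 6 / 5" using assms by (auto simp: z_def)
  have s: "z * (1 - z / 6)\<^sup>2 \<le> s" using sin_sq_ge[of y] assms by (simp add: z_def s_def)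
  have "1 - s \<le> 1 - z + z\<^sup>2 / 2 - z ^ 3 / 6"
  proof -
    have "0 \<le> z\<^sup>2 * (6 - 5 * z)" using z by simp
    then show ?thesis using s by (simp add: power2_eq_square power3_eq_cube algebra_simps)
  qed
  also have "\<dots> \<le> exp (- z)" using z by (intro exp_minus_ge_cubic)
  finally have one_sub_s: "1 - s \<le> exp (- z)" .
  have "z * exp (- z) \<le> z * (1 - z + z\<^sup>2 / 2)"
    using exp_minus_le_quadratic z by (intro mult_left_mono) auto
  also have "\<dots> \<le> s"
  proof -
    have "0 \<le> z\<^sup>2 * (24 - 17 * z)" using z by simp
    then show ?thesis using s by (simp add: power2_eq_square power3_eq_cube algebra_simps)
  qed
  finally have z_exp: "z * exp (- z) \<le> s" .
  have "1 - b * s = (1 - s) - (b - 1) * s" by (simp add: algebra_simps)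
  also have "\<dots> \<le> exp (- z) - (b - 1) * (z * exp (- z))"
    using one_sub_s z_exp assms(1) mult_left_mono[OF z_exp, of "b - 1"] by linarith
  also have "\<dots> = exp (- z) * (1 + (- ((b - 1) * z)))" by (simp add: algebra_simps)
  also have "\<dots> \<le> exp (- z) * exp (- ((b - 1) * z))"
    by (intro mult_left_mono exp_ge_add_one_self) simp
  also have "\<dots> = exp (- (b * z))" by (simp add: algebra_simps flip: exp_add)
  finally show ?thesis by (simp add: s_def z_def)
qed

lemma one_sub_sin_sq_le_exp:
  fixes c g y :: real
  assumes "0 < c" "0 \<le> y" "y\<^sup>2 \<le> 6 / 5" "c \<le> g" "c \<le> 1 / 2 \<Longrightarrow> 2 * c * (1 - c) \<le> g"
  shows "1 - 2 * sin y ^ 2 * g \<le> exp (- (2 * c * y\<^sup>2))"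
proof (cases "c \<le> 1 / 2")
  case True
  have "2 * sin y ^ 2 * (2 * c * (1 - c)) \<le> 2 * sin y ^ 2 * g"
    using assms(5)[OF True] by (rule mult_left_mono) simp
  then have "1 - 2 * sin y ^ 2 * g \<le> 1 - 2 * c * (2 - 2 * c) * sin y ^ 2"
    by (simp add: algebra_simps)
  also have "\<dots> \<le> exp (- (2 * c * y\<^sup>2))"
    using True assms(1-3) by (intro one_sub_sin_sq_le_exp_le_1) auto
  finally show ?thesis .
next
  case False
  have "2 * sin y ^ 2 * c \<le> 2 * sin y ^ 2 * g"
    using assms(4) by (rule mult_left_mono) simp
  then have "1 - 2 * sin y ^ 2 * g \<le> 1 - 2 * c * sin y ^ 2" by (simp add: algebra_simps)
  also have "\<dots> \<le> exp (- (2 * c * y\<^sup>2))"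
    using False assms(2,3) by (intro one_sub_sin_sq_le_exp_ge_1) auto
  finally show ?thesis .
qed

lemma pi_div_sq_le:
  fixes p :: nat
  assumes "p \<ge> 3"
  shows "(pi / p)\<^sup>2 \<le> 6 / 5"
proof -
  have "pi / p \<le> pi / 3" using assms by (intro divide_left_mono) auto
  also have "\<dots> \<le> 1.05" using pi_approx by simp
  finally have "(pi / p)\<^sup>2 \<le> 1.05\<^sup>2" by (intro power_mono) simp_all
  also have "\<dots> \<le> 6 / 5" by (simp add: power2_eq_square)
  finally show ?thesis .
qed

section \<open>Decay of the Fourier coefficients and equidistribution\<close>

lemma norm_fourier_sq_le:
  assumes "p > 0" and D: "is_distribution p k D"
  shows "(norm (fourier p k D \<xi>))\<^sup>2
    \<le> 1 - 2 * sin (pi / p) ^ 2 * (1 - collision_prob (vecs p k) D (character p k \<xi>))"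
proof -
  let ?V = "vecs p k" and ?s = "sin (pi / p) ^ 2" and ?\<chi> = "character p k \<xi>"
  have D0: "\<And>x. x \<in> ?V \<Longrightarrow> D x \<ge> 0" and D1: "(\<Sum>x\<in>?V. D x) = 1"
    using D by (auto simp: is_distribution_def)
  have pair: "D x * D y * Re (?\<chi> (vsub p x y))
      \<le> (1 - 2 * ?s) * (D x * D y) + 2 * ?s * (D x * (if ?\<chi> y = ?\<chi> x then D y else 0))"
    if "x \<in> ?V" "y \<in> ?V" for x y
  proof -
    have "D x * D y * Re (?\<chi> (vsub p x y))
        \<le> D x * D y * (if ?\<chi> y = ?\<chi> x then 1 else 1 - 2 * ?s)"
      using that D0 \<open>p > 0\<close> by (intro mult_left_mono Re_character_vsub_le) auto
    also have "\<dots> = (1 - 2 * ?s) * (D x * D y) + 2 * ?s * (D x * (if ?\<chi> y = ?\<chi> x then D y else 0))"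
      by (simp add: algebra_simps)
    finally show ?thesis .
  qed
  have "(norm (fourier p k D \<xi>))\<^sup>2 = Re (fourier p k D \<xi> * cnj (fourier p k D \<xi>))"
    by (simp flip: complex_norm_square)
  also have "fourier p k D \<xi> * cnj (fourier p k D \<xi>)
      = (\<Sum>x\<in>?V. \<Sum>y\<in>?V. (of_real (D x) * ?\<chi> x) * cnj (of_real (D y) * ?\<chi> y))"
    by (simp add: fourier_def sum_product)
  also have "\<dots> = (\<Sum>x\<in>?V. \<Sum>y\<in>?V. of_real (D x * D y) * ?\<chi> (vsub p x y))"
    using \<open>p > 0\<close> by (intro sum.cong refl) (simp add: character_vsub mult_ac)
  also have "Re \<dots> = (\<Sum>x\<in>?V. \<Sum>y\<in>?V. D x * D y * Re (?\<chi> (vsub p x y)))"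
    by simp
  also have "\<dots> \<le> (\<Sum>x\<in>?V. \<Sum>y\<in>?V.
      (1 - 2 * ?s) * (D x * D y) + 2 * ?s * (D x * (if ?\<chi> y = ?\<chi> x then D y else 0)))"
    by (intro sum_mono pair)
  also have "\<dots> = (1 - 2 * ?s) * (\<Sum>x\<in>?V. \<Sum>y\<in>?V. D x * D y)
      + 2 * ?s * (\<Sum>x\<in>?V. D x * (\<Sum>y\<in>?V. if ?\<chi> y = ?\<chi> x then D y else 0))"
    by (simp add: sum.distrib sum_distrib_left)
  also have "\<dots> = 1 - 2 * ?s * (1 - collision_prob ?V D ?\<chi>)"
  proof -
    have "(\<Sum>x\<in>?V. \<Sum>y\<in>?V. D x * D y) = 1" using D1 by (simp flip: sum_product)
    moreover have "(\<Sum>x\<in>?V. D x * (\<Sum>y\<in>?V. if ?\<chi> y = ?\<chi> x then D y else 0))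
        = collision_prob ?V D ?\<chi>"
      by (simp add: collision_prob_def fiber_mass_def sum.inter_filter)
    ultimately show ?thesis by (simp add: algebra_simps)
  qed
  finally show ?thesis .
qed

lemma norm_fourier_le_exp:
  assumes "p \<ge> 3" "c > 0" and D: "is_distribution p k D"
    and affine: "\<And>W. proper_affine_subspace p k W \<Longrightarrow> (\<Sum>x\<in>W. D x) \<le> 1 - c"
    and \<xi>: "\<xi> \<in> vecs p k" "\<xi> \<noteq> vzero"
  shows "norm (fourier p k D \<xi>) \<le> exp (- (c * (pi / p)\<^sup>2))"
proof -
  let ?V = "vecs p k" and ?P = "collision_prob (vecs p k) D (character p k \<xi>)"
  have "p > 0" using assms(1) by simp
  have D0: "\<And>x. x \<in> ?V \<Longrightarrow> D x \<ge> 0" and D1: "(\<Sum>x\<in>?V. D x) = 1"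
    using D by (auto simp: is_distribution_def)
  have fiber: "fiber_mass ?V D (character p k \<xi>) x \<le> 1 - c" if "x \<in> ?V" for x
    unfolding fiber_mass_def using assms(1) \<xi> that
    by (intro affine proper_affine_subspace_level_set) auto
  have "(norm (fourier p k D \<xi>))\<^sup>2 \<le> 1 - 2 * sin (pi / p) ^ 2 * (1 - ?P)"
    by (rule norm_fourier_sq_le[OF \<open>p > 0\<close> D])
  also have "\<dots> \<le> exp (- (2 * c * (pi / p)\<^sup>2))"
  proof (rule one_sub_sin_sq_le_exp)
    show "c \<le> 1 - ?P" using collision_prob_le[OF D0 D1 fiber] by simp
    show "2 * c * (1 - c) \<le> 1 - ?P" if "c \<le> 1 / 2"
      using collision_prob_le_sq[OF D0 D1 fiber that] by (simp add: power2_eq_square algebra_simps)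
  qed (use \<open>c > 0\<close> pi_div_sq_le[OF assms(1)] in simp_all)
  also have "\<dots> = (exp (- (c * (pi / p)\<^sup>2)))\<^sup>2"
    by (simp add: power2_eq_square flip: exp_add)
  finally show ?thesis by (auto intro: power2_le_imp_le)
qed

lemma conv_pow_deviation_le:
  assumes "p > 1" and D: "is_distribution p k D" and x: "x \<in> vecs p k"
    and bound: "\<And>\<xi>. \<xi> \<in> vecs p k \<Longrightarrow> \<xi> \<noteq> vzero \<Longrightarrow> norm (fourier p k D \<xi>) \<le> B"
  shows "\<bar>real p ^ k * conv_pow p k D M x - 1\<bar> \<le> (real p ^ k - 1) * B ^ M"
proof -
  let ?V = "vecs p k" and ?term = "\<lambda>\<xi>. fourier p k D \<xi> ^ M * cnj (character p k \<xi> x)"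
  have "p > 0" using assms(1) by simp
  have "of_real (real p ^ k * conv_pow p k D M x) = (\<Sum>\<xi>\<in>?V. ?term \<xi>)"
    using fourier_inversion[OF assms(1) x] by (simp add: fourier_conv_pow[OF \<open>p > 0\<close>])
  also have "\<dots> = 1 + (\<Sum>\<xi>\<in>?V - {vzero}. ?term \<xi>)"
    using sum.remove[OF finite_vecs vzero_in_vecs[OF \<open>p > 0\<close>], of ?term]
    by (simp add: fourier_vzero[OF D])
  finally have "of_real (real p ^ k * conv_pow p k D M x - 1) = (\<Sum>\<xi>\<in>?V - {vzero}. ?term \<xi>)"
    by simp
  then have "\<bar>real p ^ k * conv_pow p k D M x - 1\<bar> = norm (\<Sum>\<xi>\<in>?V - {vzero}. ?term \<xi>)"
    by (metis norm_of_real)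
  also have "\<dots> \<le> (\<Sum>\<xi>\<in>?V - {vzero}. norm (?term \<xi>))"
    by (rule norm_sum)
  also have "\<dots> \<le> (\<Sum>\<xi>\<in>?V - {vzero}. B ^ M)"
    by (intro sum_mono) (simp add: norm_mult norm_power power_mono bound)
  also have "\<dots> = (real p ^ k - 1) * B ^ M"
    using \<open>p > 0\<close> vzero_in_vecs[OF \<open>p > 0\<close>] by (simp add: card_vecs of_nat_diff)
  finally show ?thesis .
qed

lemma exp_power_le_inverse_power:
  assumes "p > 0" "c > 0"
    and M: "real M \<ge> 2 * real k * (real p)\<^sup>2 * ln (real p) / (c * pi\<^sup>2)"
  shows "exp (- (c * (pi / p)\<^sup>2)) ^ M \<le> 1 / real p ^ (2 * k)"
proof -
  have "2 * real k * ln (real p) \<le> real M * (c * (pi / p)\<^sup>2)"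
    using M assms(1,2) by (simp add: divide_le_eq power_divide field_simps)
  then have "exp (- (c * (pi / p)\<^sup>2)) ^ M \<le> exp (- (2 * real k * ln (real p)))"
    by (simp flip: exp_of_nat_mult)
  also have "\<dots> = 1 / real p ^ (2 * k)"
  proof -
    have "exp (real (2 * k) * ln (real p)) = real p ^ (2 * k)"
      using assms(1) by (simp only: exp_of_nat_mult exp_ln of_nat_0_less_iff)
    then show ?thesis by (simp add: exp_minus inverse_eq_divide)
  qed
  finally show ?thesis .
qed

theorem lemma4p2:
  fixes p k M :: nat and c :: real and D :: "(nat \<Rightarrow> nat) \<Rightarrow> real"
  assumes "prime p" and "p \<ge> 3" and "k \<ge> 1" and "c > 0"
    and "is_distribution p k D"
    and "\<And>W. proper_affine_subspace p k W \<Longrightarrow> (\<Sum>x\<in>W. D x) \<le> 1 - c"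
    and "M \<ge> 1"
    and "real M \<ge> 2 * real k * (real p)^2 * ln (real p) / (c * pi^2)"
  shows "\<forall>x\<in>vecs p k. \<bar>conv_pow p k D M x - 1 / real p ^ k\<bar> \<le> 1 / real p ^ (2 * k)"
proof
  fix x assume x: "x \<in> vecs p k"
  define q where "q = real p ^ k"
  have "q \<ge> 1" using assms(2) by (simp add: q_def)
  have "\<bar>q * conv_pow p k D M x - 1\<bar> \<le> (q - 1) * exp (- (c * (pi / p)\<^sup>2)) ^ M"
    unfolding q_def using assms(2,4-6) x
    by (intro conv_pow_deviation_le norm_fourier_le_exp) auto
  also have "\<dots> \<le> (q - 1) * (1 / q\<^sup>2)"
    using exp_power_le_inverse_power[OF _ \<open>c > 0\<close> assms(8)] assms(2) \<open>q \<ge> 1\<close>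
    by (intro mult_left_mono) (auto simp: q_def power_even_eq)
  finally have deviation: "\<bar>q * conv_pow p k D M x - 1\<bar> \<le> (q - 1) * (1 / q\<^sup>2)" .
  have "\<bar>conv_pow p k D M x - 1 / q\<bar> = \<bar>q * conv_pow p k D M x - 1\<bar> / q"
    using \<open>q \<ge> 1\<close> by (simp add: field_simps abs_div_pos[symmetric])
  also have "\<dots> \<le> (q - 1) * (1 / q\<^sup>2) / q"
    using deviation \<open>q \<ge> 1\<close> by (intro divide_right_mono) auto
  also have "\<dots> = (1 - 1 / q) / q\<^sup>2"
    using \<open>q \<ge> 1\<close> by (simp add: field_simps)
  also have "\<dots> \<le> 1 / q\<^sup>2"
    using \<open>q \<ge> 1\<close> by (intro divide_right_mono) auto
  finally show "\<bar>conv_pow p k D M x - 1 / real p ^ k\<bar> \<le> 1 / real p ^ (2 * k)"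
    by (simp add: q_def power_even_eq)
qed

end
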